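(* Let $\tilde\partial\in\mathcal D_{A,B,C}$ be a quasi-elementary differential, with associated sets $P,Q,R,X,Y,Z$, set $H$ and injection $h_+:H\to X$. Suppose $a\in A\setminus B$, $b\in B$, $b\prec a$ satisfy at least one of: (1) $(b,a)$ is a $C$-pair; (2) $b\in H$ and $a=h_+(b)$; (3) $a\in Y$, $b\in Q$, and $(\tilde\partial(b),\tilde\partial_{A\setminus B}(a))$ is a $C$-pair; (4) $a\in Z$, $b\in R$, and the elements $q\in Q$, $y\in Y$ with $\tilde\partial(q)=b$, $\tilde\partial_{A\setminus B}(y)=a$ form a $C$-pair $(q,y)$. Then $\langle\tilde\partial(a),b\rangle\ne0$.
   Context: $\mathbb E$ a field; $A=\{a_1\prec\dots\prec a_N\}$ a finite linearly ordered graded set; $\mathbb E(A)$ the graded vector space with basis $A$; $\langle a_i,a_j\rangle=\delta_{ij}$. An $M$-differential: degree $-1$, $\partial^2=0$, $\partial(a_i)\in\mathrm{span}\{a_1,\dots,a_{i-1}\}$. For $B\subset A$ with $\partial\mathbb E(B)\subset\mathbb E(B)$ it is an $M_{A,B}$-differential; $\partial_B$ = restriction, $\partial_{A\setminus B}$ = induced differential on $\mathbb E(A)/\mathbb E(B)\cong\mathbb E(A\setminus B)$. An element $a_k\in B$ is $\partial$-trivial if $k<N$, $a_{k+1}\in A\setminus B$ and $\langle\partial(a_{k+1}),a_k\rangle\neq0$. For $C\subset B$, $\mathcal D_{A,B,C}$ is the set of $M_{A,B}$-differentials for which all elements of $C$ are $\partial$-trivial. For $c\in C$, $c_+$ denotes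 the successor of $c$ in $A$ (it lies in $A\setminus B$); $(c,c_+)$ is called a $C$-pair. Elementary: each basis element maps to $0$ or a single basis element, no two to the same. For $\partial$ with $\partial_B,\partial_{A\setminus B}$ elementary: $Q=\{b\in B:\partial_Bb\ne0\}$, $R=\partial_B(Q)$, $P=B\setminus(Q\cup R)$, $Y=\{a\in A\setminus B:\partial_{A\setminus B}a\ne0\}$, $Z=\partial_{A\setminus B}(Y)$, $X$ the rest. Quasi-elementary: $\partial_B,\partial_{A\setminus B}$ elementary, each $\partial(x)$ ($x\in X$) has a nonzero coefficient on at most one element of $P$, that coefficient being $1$, and each element of $P$ has nonzero coefficient in at most one $\partial(x)$, $x\in X$. $H$ is the set of $\partial$-boundary homologically essential elements (for a quasi-elementary differential, equivalently the set of $p\in P$ appearing in some $\partial(x)$, $x\in X$), and $h_+(b)$ for $b\in H$ is the unique $x\in X$ with $\langle\partial(x),b\rangle\ne0$. *)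

theory Defs
  imports Main
begin

text \<open>An endomorphism of E(A) is encoded by its matrix of
  coefficients: d x y = <d(x), y>, the coefficient of the basis element y in d(x).\<close>

definition M_differential :: "'a::linorder set \<Rightarrow> ('a \<Rightarrow> int) \<Rightarrow> ('a \<Rightarrow> 'a \<Rightarrow> 'k::field) \<Rightarrow> bool" where
  "M_differential A deg d \<longleftrightarrow>
     (\<forall>x y. d x y \<noteq> 0 \<longrightarrow> x \<in> A \<and> y \<in> A) \<and>
     (\<forall>x y. d x y \<noteq> 0 \<longrightarrow> deg y = deg x - 1) \<and>
     (\<forall>x\<in>A. \<forall>z\<in>A. (\<Sum>y\<in>A. d x y * d y z) = 0) \<and>
     (\<forall>x y. d x y \<noteq> 0 \<longrightarrow> y < x)"

definition MAB_differential :: "'a::linorder set \<Rightarrow> 'a set \<Rightarrow> ('a \<Rightarrow> int) \<Rightarrow> ('a \<Rightarrow> 'a \<Rightarrow> 'k::field) \<Rightarrow> bool" where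
  "MAB_differential A B deg d \<longleftrightarrow> M_differential A deg d \<and> B \<subseteq> A \<and>
     (\<forall>x\<in>B. \<forall>y. d x y \<noteq> 0 \<longrightarrow> y \<in> B)"

definition succ_in :: "'a::linorder set \<Rightarrow> 'a \<Rightarrow> 'a" where
  "succ_in A c = (LEAST x. x \<in> A \<and> c < x)"

definition d_trivial :: "'a::linorder set \<Rightarrow> 'a set \<Rightarrow> ('a \<Rightarrow> 'a \<Rightarrow> 'k::field) \<Rightarrow> 'a \<Rightarrow> bool" where
  "d_trivial A B d c \<longleftrightarrow> c \<in> B \<and> (\<exists>x\<in>A. c < x) \<and> succ_in A c \<in> A - B \<and>
     d (succ_in A c) c \<noteq> 0"

definition D_ABC :: "'a::linorder set \<Rightarrow> 'a set \<Rightarrow> 'a set \<Rightarrow> ('a \<Rightarrow> int) \<Rightarrow> ('a \<Rightarrow> 'a \<Rightarrow> 'k::field) \<Rightarrow> bool" where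
  "D_ABC A B C deg d \<longleftrightarrow> C \<subseteq> B \<and> MAB_differential A B deg d \<and> (\<forall>c\<in>C. d_trivial A B d c)"

definition C_pair :: "'a::linorder set \<Rightarrow> 'a set \<Rightarrow> 'a \<Rightarrow> 'a \<Rightarrow> bool" where
  "C_pair A C c c' \<longleftrightarrow> c \<in> C \<and> c' = succ_in A c"

text \<open>The restriction of d to the basis S (for S = B: the restricted differential;
  for S = A - B: the induced differential on the quotient) is elementary.\<close>
definition elementary_on :: "'a set \<Rightarrow> ('a \<Rightarrow> 'a \<Rightarrow> 'k::field) \<Rightarrow> bool" where
  "elementary_on S d \<longleftrightarrow>
     (\<forall>x\<in>S. (\<forall>y\<in>S. d x y = 0) \<or> (\<exists>y\<in>S. d x y = 1 \<and> (\<forall>y'\<in>S. y' \<noteq> y \<longrightarrow> d x y' = 0))) \<and>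
     (\<forall>x1\<in>S. \<forall>x2\<in>S. \<forall>y\<in>S. d x1 y \<noteq> 0 \<longrightarrow> d x2 y \<noteq> 0 \<longrightarrow> x1 = x2)"

definition src_set :: "'a set \<Rightarrow> ('a \<Rightarrow> 'a \<Rightarrow> 'k::field) \<Rightarrow> 'a set" where
  "src_set S d = {x\<in>S. \<exists>y\<in>S. d x y \<noteq> 0}"

definition tgt_set :: "'a set \<Rightarrow> ('a \<Rightarrow> 'a \<Rightarrow> 'k::field) \<Rightarrow> 'a set" where
  "tgt_set S d = {y\<in>S. \<exists>x\<in>S. d x y \<noteq> 0}"

definition img_in :: "'a set \<Rightarrow> ('a \<Rightarrow> 'a \<Rightarrow> 'k::field) \<Rightarrow> 'a \<Rightarrow> 'a" where
  "img_in S d x = (THE y. y \<in> S \<and> d x y \<noteq> 0)"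

definition Qset where "Qset B d = src_set B d"
definition Rset where "Rset B d = tgt_set B d"
definition Pset where "Pset B d = B - (Qset B d \<union> Rset B d)"
definition Yset where "Yset A B d = src_set (A - B) d"
definition Zset where "Zset A B d = tgt_set (A - B) d"
definition Xset where "Xset A B d = (A - B) - (Yset A B d \<union> Zset A B d)"

definition quasi_elementary :: "'a set \<Rightarrow> 'a set \<Rightarrow> ('a \<Rightarrow> 'a \<Rightarrow> 'k::field) \<Rightarrow> bool" where
  "quasi_elementary A B d \<longleftrightarrow> elementary_on B d \<and> elementary_on (A - B) d \<and>
     (\<forall>x\<in>Xset A B d. \<forall>p\<in>Pset B d. d x p \<noteq> 0 \<longrightarrow>
         d x p = 1 \<and> (\<forall>p'\<in>Pset B d. p' \<noteq> p \<longrightarrow> d x p' = 0)) \<and>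
     (\<forall>p\<in>Pset B d. \<forall>x1\<in>Xset A B d. \<forall>x2\<in>Xset A B d. d x1 p \<noteq> 0 \<longrightarrow> d x2 p \<noteq> 0 \<longrightarrow> x1 = x2)"

text \<open>Boundary homologically essential elements, in the characterisation valid for
  quasi-elementary differentials, and the map h_+.\<close>
definition Hset where "Hset A B d = {p\<in>Pset B d. \<exists>x\<in>Xset A B d. d x p \<noteq> 0}"
definition h_plus where "h_plus A B d b = (THE x. x \<in> Xset A B d \<and> d x b \<noteq> 0)"

end

theory Submission
  imports Defs
begin

text \<open>Cases (3) and (4) come from
  \<open>\<partial>\<^sup>2 = 0\<close>: for x, v in A - B and u, z in B with \<open>\<langle>\<partial>x, v\<rangle> \<noteq> 0\<close> and \<open>\<langle>\<partial>u, z\<rangle> \<noteq> 0\<close>, elementarity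
  of both parts leaves only the paths x \<rightarrow> u \<rightarrow> z and x \<rightarrow> v \<rightarrow> z in \<open>\<langle>\<partial>\<^sup>2x, z\<rangle>\<close>, so
  \<open>\<langle>\<partial>x, u\<rangle> = -\<langle>\<partial>v, z\<rangle>\<close>, and the C-pair makes one side nonzero.\<close>

lemma elementary_on_coeff_eq_1:
  assumes "elementary_on S d" "x \<in> S" "y \<in> S" "d x y \<noteq> 0"
  shows "d x y = 1"
  using assms unfolding elementary_on_def by (metis (full_types))

lemma elementary_on_unique_target:
  assumes "elementary_on S d" "x \<in> S" "y \<in> S" "d x y \<noteq> 0" "y' \<in> S" "y' \<noteq> y"
  shows "d x y' = 0"
  using assms unfolding elementary_on_def by metis

lemma elementary_on_unique_source:
  assumes "elementary_on S d" "x \<in> S" "y \<in> S" "d x y \<noteq> 0" "x' \<in> S" "x' \<noteq> x"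
  shows "d x' y = 0"
  using assms unfolding elementary_on_def by blast

lemma img_in_src_set:
  assumes "elementary_on S d" "x \<in> src_set S d"
  shows "img_in S d x \<in> S" "d x (img_in S d x) \<noteq> 0"
proof -
  obtain y where y: "y \<in> S" "d x y \<noteq> 0" and "x \<in> S"
    using assms(2) unfolding src_set_def by blast
  have "img_in S d x = y"
    unfolding img_in_def
  proof (rule the_equality)
    fix y' assume "y' \<in> S \<and> d x y' \<noteq> 0"
    then show "y' = y"
      using elementary_on_unique_target[OF assms(1) \<open>x \<in> S\<close> y] by blast
  qed (use y in blast)
  with y show "img_in S d x \<in> S" "d x (img_in S d x) \<noteq> 0" by simp_all
qed

lemma C_pair_coeff_nonzero:
  assumes "D_ABC A B C deg d" "C_pair A C c c'"
  shows "d c' c \<noteq> 0"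
  using assms unfolding D_ABC_def C_pair_def d_trivial_def by blast

lemma h_plus_coeff_nonzero:
  assumes "quasi_elementary A B d" "b \<in> Hset A B d"
  shows "d (h_plus A B d b) b \<noteq> 0"
proof -
  obtain x where x: "x \<in> Xset A B d" "d x b \<noteq> 0" and "b \<in> Pset B d"
    using assms(2) unfolding Hset_def by blast
  have "h_plus A B d b = x"
    unfolding h_plus_def
  proof (rule the_equality)
    fix x' assume "x' \<in> Xset A B d \<and> d x' b \<noteq> 0"
    then show "x' = x"
      using assms(1) x \<open>b \<in> Pset B d\<close> unfolding quasi_elementary_def by blast
  qed (use x in blast)
  with x show ?thesis by simp
qed

lemma elementary_parts_coeff_exchange:
  assumes "M_differential A deg d" "finite A" "B \<subseteq> A"
    and elem_B: "elementary_on B d" and elem_AB: "elementary_on (A - B) d"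
    and "x \<in> A - B" "v \<in> A - B" "d x v \<noteq> 0"
    and "u \<in> B" "z \<in> B" "d u z \<noteq> 0"
  shows "d x u = - d v z"
proof -
  have "0 = (\<Sum>w\<in>A. d x w * d w z)"
    using assms(1,3,6,10) unfolding M_differential_def by auto
  also have "\<dots> = (\<Sum>w\<in>{u, v}. d x w * d w z)"
  proof (rule sum.mono_neutral_right)
    show "\<forall>w\<in>A - {u, v}. d x w * d w z = 0"
    proof
      fix w assume w: "w \<in> A - {u, v}"
      show "d x w * d w z = 0"
      proof (cases "w \<in> B")
        case True
        then show ?thesis
          using elementary_on_unique_source[OF elem_B \<open>u \<in> B\<close> \<open>z \<in> B\<close> \<open>d u z \<noteq> 0\<close>] w by simp
      next
        case False
        then show ?thesis
          using elementary_on_unique_target[OF elem_AB \<open>x \<in> A - B\<close> \<open>v \<in> A - B\<close> \<open>d x v \<noteq> 0\<close>] w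
          by simp
      qed
    qed
  qed (use assms in auto)
  also have "\<dots> = d x u + d v z"
  proof -
    have "d u z = 1" "d x v = 1"
      using assms elementary_on_coeff_eq_1[OF elem_B] elementary_on_coeff_eq_1[OF elem_AB]
      by blast+
    moreover have "u \<noteq> v"
      using assms by blast
    ultimately show ?thesis
      by simp
  qed
  finally show ?thesis
    by (simp add: eq_neg_iff_add_eq_0)
qed

theorem lemma4p2:
  fixes A B C :: "'a::linorder set" and deg :: "'a \<Rightarrow> int" and d :: "'a \<Rightarrow> 'a \<Rightarrow> 'k::field"
    and a b :: 'a
  assumes "finite A"
    and "D_ABC A B C deg d"
    and "quasi_elementary A B d"
    and "a \<in> A - B" and "b \<in> B" and "b < a"
    and "C_pair A C b a
         \<or> (b \<in> Hset A B d \<and> a = h_plus A B d b)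
         \<or> (a \<in> Yset A B d \<and> b \<in> Qset B d \<and>
              C_pair A C (img_in B d b) (img_in (A - B) d a))
         \<or> (a \<in> Zset A B d \<and> b \<in> Rset B d \<and>
              (\<exists>q\<in>Qset B d. \<exists>y\<in>Yset A B d. img_in B d q = b \<and> img_in (A - B) d y = a
                   \<and> C_pair A C q y))"
  shows "d a b \<noteq> 0"
proof -
  have md: "M_differential A deg d" and "B \<subseteq> A"
    using assms(2) unfolding D_ABC_def MAB_differential_def by auto
  have elem_B: "elementary_on B d" and elem_AB: "elementary_on (A - B) d"
    using assms(3) unfolding quasi_elementary_def by auto
  note exchange = elementary_parts_coeff_exchange[OF md assms(1) \<open>B \<subseteq> A\<close> elem_B elem_AB]
  note C_pair_nonzero = C_pair_coeff_nonzero[OF assms(2)]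
  from assms(7) consider
      "C_pair A C b a"
    | "b \<in> Hset A B d" "a = h_plus A B d b"
    | "b \<in> Qset B d" "a \<in> Yset A B d" "C_pair A C (img_in B d b) (img_in (A - B) d a)"
    | q y where "q \<in> Qset B d" "y \<in> Yset A B d" "img_in B d q = b" "img_in (A - B) d y = a"
        "C_pair A C q y"
    by blast
  then show ?thesis
  proof cases
    case 1
    then show ?thesis by (rule C_pair_nonzero)
  next
    case 2
    then show ?thesis using h_plus_coeff_nonzero[OF assms(3)] by simp
  next
    case 3
    let ?c = "img_in B d b" and ?v = "img_in (A - B) d a"
    have "d a b = - d ?v ?c"
      using 3(1,2) img_in_src_set[OF elem_B, of b] img_in_src_set[OF elem_AB, of a]
        exchange[of a ?v b ?c] assms(4,5)
      unfolding Qset_def Yset_def by simp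
    with C_pair_nonzero[OF 3(3)] show ?thesis by simp
  next
    case (4 q y)
    have "q \<in> B" "y \<in> A - B"
      using 4(1,2) unfolding Qset_def Yset_def src_set_def by simp_all
    then have "d y q = - d a b"
      using 4 img_in_src_set[OF elem_B, of q] img_in_src_set[OF elem_AB, of y]
        exchange[of y a q b] assms(4,5)
      unfolding Qset_def Yset_def by simp
    with C_pair_nonzero[OF 4(5)] show ?thesis by simp
  qed
qed

end
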